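(* Let $\mathcal{X}$, $f_i$, the breakpoints and the piecewise linear functions $\overline{f}_i$ be as in the context, and consider the problem (SP): $\min_{(y,x)\in\mathcal{X}}\sum_{i=1}^{n_y}\overline{f}_i(y_i)+\sum_{\omega\in\Omega_1}p_\omega c_\omega^Tx_\omega$. Let $(y^*,x^* )\in\mathcal{X}$ be an optimal solution of (SP). Then (SP) has an optimal solution that is an extreme point of the polyhedron $\mathcal{X}(y^* )=\{(y,x)\in\mathcal{X}: y_i=y^*_i \ \forall i\in\{1,\dots,n_{\mathrm{I}}\}\}$.
   Context: Let $\Omega_1$ be a finite index set, $n_y\geq n_{\mathrm{I}}\geq0$ integers, $A\in\mathbb{R}^{m_1\times n_y}$, $b\in\mathbb{R}^{m_1}$, $D\in\mathbb{R}^{m_2\times n_y}$, and for each $\omega\in\Omega_1$: $p_\omega\in\mathbb{R}$, $c_\omega\in\mathbb{R}^{n_x}$, $B_\omega\in\mathbb{R}^{m_2\times n_x}$, $d_\omega\in\mathbb{R}^{m_2}$. Let $\mathcal{X}=\{(y,\{x_\omega\}_{\omega\in\Omega_1})\geq0: y\in\mathbb{Z}^{n_{\mathrm{I}}}\times\mathbb{R}^{n_y-n_{\mathrm{I}}},\ Ay=b,\ B_\omega x_\omega+Dy=d_\omega\ \forall\omega\in\Omega_1\}$, assumed nonempty and bounded, so that there are vectors $\underline{y}\leq\overline{y}$ with $\underline{y}\leq y\leq\overline{y}$ for all $(y,x)\in\mathcal{X}$. Functions $f_i:\mathbb{R}\to\mathbb{R}$ ($i=1,\dots,n_y$) are concave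 and lower semicontinuous. For each $i$, given breakpoints $y_i^{(1)}<y_i^{(2)}<\dots<y_i^{(k_i)}$ ($k_i\geq2$) with $y_i\in[y_i^{(1)},y_i^{(k_i)}]$ for every $(y,x)\in\mathcal{X}$, define $\overline{f}_i:[y_i^{(1)},y_i^{(k_i)}]\to\mathbb{R}$ by $\overline{f}_i(y_i)=\frac{f_i(y_i^{(j+1)})-f_i(y_i^{(j)})}{y_i^{(j+1)}-y_i^{(j)}}(y_i-y_i^{(j)})+f_i(y_i^{(j)})$ for $y_i\in[y_i^{(j)},y_i^{(j+1)}]$, $j=1,\dots,k_i-1$ (the formulas agree at common breakpoints). *)

theory Defs
  imports "HOL-Analysis.Analysis"
begin

text \<open>Conventions: indices are 0-based. y :: nat => real with y i, i < ny the
components (zero outside); x :: 'w => nat => real with x w j, w in Omega, j < nx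
the components (zero outside).\<close>

definition lsc :: "(real \<Rightarrow> real) \<Rightarrow> bool" where
  "lsc f \<longleftrightarrow> (\<forall>a. closed {t. f t \<le> a})"

definition feasX ::
  "nat \<Rightarrow> nat \<Rightarrow> nat \<Rightarrow> 'w set \<Rightarrow>
   nat \<Rightarrow> (nat \<Rightarrow> nat \<Rightarrow> real) \<Rightarrow> (nat \<Rightarrow> real) \<Rightarrow>
   nat \<Rightarrow> (nat \<Rightarrow> nat \<Rightarrow> real) \<Rightarrow> ('w \<Rightarrow> nat \<Rightarrow> nat \<Rightarrow> real) \<Rightarrow> ('w \<Rightarrow> nat \<Rightarrow> real) \<Rightarrow>
   ((nat \<Rightarrow> real) \<times> ('w \<Rightarrow> nat \<Rightarrow> real)) set" where
  "feasX nI ny nx \<Omega> m1 A b m2 D B d =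
     {(y, x). (\<forall>i. ny \<le> i \<longrightarrow> y i = 0)
            \<and> (\<forall>w j. w \<notin> \<Omega> \<or> nx \<le> j \<longrightarrow> x w j = 0)
            \<and> (\<forall>i<ny. 0 \<le> y i)
            \<and> (\<forall>w\<in>\<Omega>. \<forall>j<nx. 0 \<le> x w j)
            \<and> (\<forall>i<nI. y i \<in> \<int>)
            \<and> (\<forall>r<m1. (\<Sum>i<ny. A r i * y i) = b r)
            \<and> (\<forall>w\<in>\<Omega>. \<forall>r<m2. (\<Sum>j<nx. B w r j * x w j) + (\<Sum>i<ny. D r i * y i) = d w r)}"

text \<open>Piecewise linear interpolation of f i at breakpoints bp i 0 < ... < bp i (k i - 1).\<close>
definition fbar :: "(nat \<Rightarrow> real \<Rightarrow> real) \<Rightarrow> (nat \<Rightarrow> nat \<Rightarrow> real) \<Rightarrow> (nat \<Rightarrow> nat) \<Rightarrow> nat \<Rightarrow> real \<Rightarrow> real" where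
  "fbar f bp k i t =
     (let j = (LEAST j. j + 1 < k i \<and> bp i j \<le> t \<and> t \<le> bp i (j + 1)) in
        (f i (bp i (j + 1)) - f i (bp i j)) / (bp i (j + 1) - bp i j) * (t - bp i j) + f i (bp i j))"

definition sp_obj :: "nat \<Rightarrow> nat \<Rightarrow> 'w set \<Rightarrow> (nat \<Rightarrow> real \<Rightarrow> real) \<Rightarrow> (nat \<Rightarrow> nat \<Rightarrow> real) \<Rightarrow>
   (nat \<Rightarrow> nat) \<Rightarrow> ('w \<Rightarrow> real) \<Rightarrow> ('w \<Rightarrow> nat \<Rightarrow> real) \<Rightarrow>
   (nat \<Rightarrow> real) \<times> ('w \<Rightarrow> nat \<Rightarrow> real) \<Rightarrow> real" where
  "sp_obj ny nx \<Omega> f bp k p c z =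
     (\<Sum>i<ny. fbar f bp k i (fst z i)) + (\<Sum>w\<in>\<Omega>. p w * (\<Sum>j<nx. c w j * snd z w j))"

definition comb :: "real \<Rightarrow> (nat \<Rightarrow> real) \<times> ('w \<Rightarrow> nat \<Rightarrow> real) \<Rightarrow>
   (nat \<Rightarrow> real) \<times> ('w \<Rightarrow> nat \<Rightarrow> real) \<Rightarrow> (nat \<Rightarrow> real) \<times> ('w \<Rightarrow> nat \<Rightarrow> real)" where
  "comb t u v = ((\<lambda>i. t * fst u i + (1 - t) * fst v i),
                 (\<lambda>w j. t * snd u w j + (1 - t) * snd v w j))"

definition extreme_pt :: "(nat \<Rightarrow> real) \<times> ('w \<Rightarrow> nat \<Rightarrow> real) \<Rightarrow>
   ((nat \<Rightarrow> real) \<times> ('w \<Rightarrow> nat \<Rightarrow> real)) set \<Rightarrow> bool" where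
  "extreme_pt z S \<longleftrightarrow> z \<in> S \<and>
     \<not> (\<exists>u\<in>S. \<exists>v\<in>S. u \<noteq> v \<and> (\<exists>t. 0 < t \<and> t < 1 \<and> z = comb t u v))"

end

theory Submission
  imports Defs
begin

text \<open>Each \<open>fbar f bp k i\<close> is the pointwise minimum of the secants of \<open>f i\<close> through consecutive
  breakpoints, because a concave function lies below each of its secants outside the secant's
  interval; hence the objective is concave on the feasible set. Fixing the integer variables leaves
  a bounded polyhedron in standard form, on which the optimal points therefore form a face. Choose an
  optimal point with the largest number of vanishing coordinates. If it were a proper convex
  combination of two distinct points of the polyhedron, both would be optimal, and moving along
  the line through them until one more coordinate vanishes, which boundedness makes possible,
  would produce an optimal point with more zeros.\<close>

definition secant :: "(real \<Rightarrow> real) \<Rightarrow> real \<Rightarrow> real \<Rightarrow> real \<Rightarrow> real" where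
  "secant F p q t = (F q - F p) / (q - p) * (t - p) + F p"

lemma secant_convex_combination:
  "secant F p q ((1 - l) * t1 + l * t2) = (1 - l) * secant F p q t1 + l * secant F p q t2"
proof -
  have "m * ((1 - l) * t1 + l * t2 - p) + c = (1 - l) * (m * (t1 - p) + c) + l * (m * (t2 - p) + c)"
    for m c :: real
    by (simp add: algebra_simps)
  then show ?thesis
    unfolding secant_def .
qed

lemma secant_of_secant:
  assumes "p \<noteq> q"
  shows "secant (secant G r s) p q t = secant G r s t"
proof -
  define m where "m = (G s - G r) / (s - r)"
  have line: "secant G r s = (\<lambda>x. m * (x - r) + G r)"
    by (simp add: secant_def m_def fun_eq_iff)
  have "m * (q - r) + G r - (m * (p - r) + G r) = m * (q - p)"
    by (simp add: algebra_simps)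
  then have "secant (secant G r s) p q t = m * (q - p) / (q - p) * (t - p) + (m * (p - r) + G r)"
    by (simp add: line secant_def)
  also have "\<dots> = m * (t - p) + (m * (p - r) + G r)"
    using assms by simp
  also have "\<dots> = secant G r s t"
    by (simp add: line algebra_simps)
  finally show ?thesis .
qed

lemma secant_mono:
  assumes "p < q" "p \<le> t" "t \<le> q" "F p \<le> H p" "F q \<le> H q"
  shows "secant F p q t \<le> secant H p q t"
proof -
  define l where "l = (t - p) / (q - p)"
  have l: "0 \<le> l" "l \<le> 1"
    using assms by (auto simp: l_def field_simps)
  have "secant G p q t = (1 - l) * G p + l * G q" for G
  proof -
    have "secant G p q t = G p + l * (G q - G p)"
      by (simp add: secant_def l_def)
    then show ?thesis
      by (simp add: algebra_simps)
  qed
  then show ?thesis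
    using assms(4,5) l by (simp add: add_mono mult_left_mono)
qed

lemma concave_on_le_secant_outside:
  fixes F :: "real \<Rightarrow> real"
  assumes F: "concave_on UNIV F" and "p < q" and s: "s \<le> p \<or> q \<le> s"
  shows "F s \<le> secant F p q s"
proof -
  have F_Icc: "concave_on {a..b} F" for a b
    using F convex_on_subset unfolding concave_on_def by blast
  consider "s = p \<or> s = q" | "s < p" | "q < s"
    using s by linarith
  then show ?thesis
  proof cases
    case 1
    then show ?thesis
      using \<open>p < q\<close> by (auto simp: secant_def)
  next
    case 2
    have "(F q - F s) / (q - s) * (p - s) + F s \<le> F p"
      using concave_onD_Icc'[of s q F p] F_Icc \<open>p < q\<close> 2 by simp
    then show ?thesis
      using \<open>p < q\<close> 2 by (simp add: secant_def field_simps)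
  next
    case 3
    have "(F p - F s) / (s - p) * (s - q) + F s \<le> F q"
      using concave_onD_Icc''[of p s F q] F_Icc \<open>p < q\<close> 3 by simp
    then show ?thesis
      using \<open>p < q\<close> 3 by (simp add: secant_def field_simps)
  qed
qed

lemma breakpoint_interval_exists:
  fixes a :: "nat \<Rightarrow> real"
  assumes "2 \<le> K" "a 0 \<le> t" "t \<le> a (K - 1)"
  shows "\<exists>j. j + 1 < K \<and> a j \<le> t \<and> t \<le> a (j + 1)"
  using assms
proof (induction K rule: nat_induct_at_least)
  case base
  then show ?case
    by (intro exI[of _ 0]) auto
next
  case (Suc K)
  show ?case
  proof (cases "t \<le> a (K - 1)")
    case True
    then show ?thesis
      using Suc by (metis less_Suc_eq)
  next
    case False
    then show ?thesis
      using Suc by (intro exI[of _ "K - 1"]) auto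
  qed
qed

lemma fbar_eq_secant:
  assumes "2 \<le> k i" "bp i 0 \<le> t" "t \<le> bp i (k i - 1)"
  obtains j where "j + 1 < k i" "bp i j \<le> t" "t \<le> bp i (j + 1)"
    "fbar f bp k i t = secant (f i) (bp i j) (bp i (j + 1)) t"
proof -
  let ?P = "\<lambda>j. j + 1 < k i \<and> bp i j \<le> t \<and> t \<le> bp i (j + 1)"
  define j where "j = (LEAST j. ?P j)"
  have "?P j"
    unfolding j_def using breakpoint_interval_exists[OF assms] by (rule LeastI_ex)
  moreover have "fbar f bp k i t = secant (f i) (bp i j) (bp i (j + 1)) t"
    by (simp add: fbar_def secant_def j_def Let_def)
  ultimately show ?thesis
    using that by blast
qed

lemma enclosing_secant_le:
  fixes F :: "real \<Rightarrow> real" and a :: "nat \<Rightarrow> real"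
  assumes F: "concave_on UNIV F"
    and a: "\<And>j. j + 1 < K \<Longrightarrow> a j < a (j + 1)"
    and j: "j + 1 < K" and j0: "j0 + 1 < K" and t: "a j0 \<le> t" "t \<le> a (j0 + 1)"
  shows "secant F (a j0) (a (j0 + 1)) t \<le> secant F (a j) (a (j + 1)) t"
proof (cases "j = j0")
  case False
  have "a m < a n" if "m < n" "n < K" for m n
    by (rule lift_Suc_mono_less_ivl[where N = "{j. j + 1 < K}"]) (use a that in auto)
  then have a_mono: "a m \<le> a n" if "m \<le> n" "n < K" for m n
    using that by (cases "m = n") (auto simp: less_imp_le)
  have outside: "a j0 \<le> a j \<or> a (j + 1) \<le> a j0" "a (j0 + 1) \<le> a j \<or> a (j + 1) \<le> a (j0 + 1)"
    using False j j0 a_mono[of "j0 + 1" j] a_mono[of "j + 1" j0] a_mono[of j0 "j0 + 1"]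
    by (cases "j < j0"; simp)+
  have "secant F (a j0) (a (j0 + 1)) t \<le> secant (secant F (a j) (a (j + 1))) (a j0) (a (j0 + 1)) t"
    using a[OF j] a[OF j0] t outside
    by (intro secant_mono concave_on_le_secant_outside[OF F]) auto
  also have "\<dots> = secant F (a j) (a (j + 1)) t"
    using a[OF j0] by (intro secant_of_secant) simp
  finally show ?thesis .
qed simp

lemma fbar_le_secant:
  assumes "concave_on UNIV (f i)" "2 \<le> k i" "\<forall>j. j + 1 < k i \<longrightarrow> bp i j < bp i (j + 1)"
    and "bp i 0 \<le> t" "t \<le> bp i (k i - 1)" "j + 1 < k i"
  shows "fbar f bp k i t \<le> secant (f i) (bp i j) (bp i (j + 1)) t"
proof -
  obtain j0 where "j0 + 1 < k i" "bp i j0 \<le> t" "t \<le> bp i (j0 + 1)"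
    "fbar f bp k i t = secant (f i) (bp i j0) (bp i (j0 + 1)) t"
    using fbar_eq_secant assms(2,4,5) .
  then show ?thesis
    using enclosing_secant_le[of "f i" "k i" "bp i" j j0 t] assms by simp
qed

lemma concave_on_fbar:
  assumes "concave_on UNIV (f i)" "2 \<le> k i" "\<forall>j. j + 1 < k i \<longrightarrow> bp i j < bp i (j + 1)"
  shows "concave_on {bp i 0..bp i (k i - 1)} (fbar f bp k i)"
proof (rule concave_on_linorderI)
  fix l x y :: real
  assume l: "0 < l" "l < 1" and xy: "x \<in> {bp i 0..bp i (k i - 1)}" "y \<in> {bp i 0..bp i (k i - 1)}"
  let ?m = "(1 - l) *\<^sub>R x + l *\<^sub>R y"
  have "?m \<in> {bp i 0..bp i (k i - 1)}"
    using l xy by (intro convexD_alt) auto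
  then obtain j where j: "j + 1 < k i" "fbar f bp k i ?m = secant (f i) (bp i j) (bp i (j + 1)) ?m"
    using fbar_eq_secant[of k i bp ?m f] assms(2) by auto
  have "(1 - l) * fbar f bp k i x + l * fbar f bp k i y
      \<le> (1 - l) * secant (f i) (bp i j) (bp i (j + 1)) x + l * secant (f i) (bp i j) (bp i (j + 1)) y"
    using l xy j(1) by (intro add_mono mult_left_mono fbar_le_secant[of f i k bp, OF assms]) auto
  also have "\<dots> = fbar f bp k i ?m"
    using j(2) by (simp add: secant_convex_combination)
  finally show "(1 - l) * fbar f bp k i x + l * fbar f bp k i y \<le> fbar f bp k i ?m" .
qed simp

fun coord :: "nat + ('w \<times> nat) \<Rightarrow> (nat \<Rightarrow> real) \<times> ('w \<Rightarrow> nat \<Rightarrow> real) \<Rightarrow> real" where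
  "coord (Inl i) z = fst z i"
| "coord (Inr (w, j)) z = snd z w j"

definition coordset :: "nat \<Rightarrow> nat \<Rightarrow> 'w set \<Rightarrow> (nat + ('w \<times> nat)) set" where
  "coordset ny nx \<Omega> = Inl ` {..<ny} \<union> Inr ` (\<Omega> \<times> {..<nx})"

lemma finite_coordset: "finite \<Omega> \<Longrightarrow> finite (coordset ny nx \<Omega>)"
  by (simp add: coordset_def)

lemma coord_comb: "coord c (comb s u v) = s * coord c u + (1 - s) * coord c v"
  by (cases c) (auto simp: comb_def)

lemma comb_comb: "comb a (comb b u v) v = comb (a * b) u v"
  by (simp add: comb_def algebra_simps)

lemma sum_mult_comb:
  fixes a u v :: "'a \<Rightarrow> real"
  shows "(\<Sum>i\<in>I. a i * (s * u i + (1 - s) * v i)) = s * (\<Sum>i\<in>I. a i * u i) + (1 - s) * (\<Sum>i\<in>I. a i * v i)"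
proof -
  have "a i * (s * u i + (1 - s) * v i) = s * (a i * u i) + (1 - s) * (a i * v i)" for i
    by (simp add: algebra_simps)
  then show ?thesis
    by (simp add: sum.distrib sum_distrib_left)
qed

lemma feasX_nonneg:
  assumes "z \<in> feasX nI ny nx \<Omega> m1 A b m2 D B d" "c \<in> coordset ny nx \<Omega>"
  shows "0 \<le> coord c z"
  using assms by (cases z) (auto simp: feasX_def coordset_def)

lemma feasX_coord_eqI:
  assumes u: "u \<in> feasX nI ny nx \<Omega> m1 A b m2 D B d" and v: "v \<in> feasX nI ny nx \<Omega> m1 A b m2 D B d"
    and eq: "\<forall>c\<in>coordset ny nx \<Omega>. coord c u = coord c v"
  shows "u = v"
proof -
  obtain uy ux vy vx where uv: "u = (uy, ux)" "v = (vy, vx)"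
    by (cases u, cases v)
  have "uy i = vy i" for i
    using eq[rule_format, of "Inl i"] u v uv by (cases "i < ny") (auto simp: feasX_def coordset_def)
  moreover have "ux w j = vx w j" for w j
    using eq[rule_format, of "Inr (w, j)"] u v uv
    by (cases "w \<in> \<Omega> \<and> j < nx") (auto simp: feasX_def coordset_def)
  ultimately show ?thesis
    using uv by (simp add: fun_eq_iff)
qed

lemma feasX_comb:
  assumes u: "u \<in> feasX nI ny nx \<Omega> m1 A b m2 D B d" and v: "v \<in> feasX nI ny nx \<Omega> m1 A b m2 D B d"
    and fixed: "\<forall>i<nI. fst u i = fst v i"
    and nonneg: "\<forall>c\<in>coordset ny nx \<Omega>. 0 \<le> coord c (comb s u v)"
  shows "comb s u v \<in> feasX nI ny nx \<Omega> m1 A b m2 D B d"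
proof -
  obtain uy ux vy vx where uv: "u = (uy, ux)" "v = (vy, vx)"
    by (cases u, cases v)
  have same: "s * r + (1 - s) * r = r" for r :: real
    by (simp add: algebra_simps)
  have "0 \<le> s * uy i + (1 - s) * vy i" if "i < ny" for i
    using nonneg[rule_format, of "Inl i"] that uv by (simp add: coordset_def comb_def)
  moreover have "0 \<le> s * ux w j + (1 - s) * vx w j" if "w \<in> \<Omega>" "j < nx" for w j
    using nonneg[rule_format, of "Inr (w, j)"] that uv by (simp add: coordset_def comb_def)
  moreover have "s * uy i + (1 - s) * vy i = uy i" if "i < nI" for i
    using fixed that uv same by simp
  moreover have "(\<Sum>j<nx. B w r j * (s * ux w j + (1 - s) * vx w j))
      + (\<Sum>i<ny. D r i * (s * uy i + (1 - s) * vy i)) = d w r" if "w \<in> \<Omega>" "r < m2" for w r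
  proof -
    have "(\<Sum>j<nx. B w r j * (s * ux w j + (1 - s) * vx w j))
        + (\<Sum>i<ny. D r i * (s * uy i + (1 - s) * vy i))
        = s * ((\<Sum>j<nx. B w r j * ux w j) + (\<Sum>i<ny. D r i * uy i))
          + (1 - s) * ((\<Sum>j<nx. B w r j * vx w j) + (\<Sum>i<ny. D r i * vy i))"
      unfolding sum_mult_comb by (simp add: algebra_simps)
    also have "\<dots> = d w r"
      using u v uv that same by (simp add: feasX_def)
    finally show ?thesis .
  qed
  ultimately show ?thesis
    using u v uv by (auto simp: feasX_def comb_def sum_mult_comb same)
qed

text \<open>A bounded polyhedron \<open>{z. A z = b, z \<ge> 0}\<close>, seen through its coordinates \<open>proj c\<close>. The
  equations \<open>A z = b\<close> are encoded by \<open>comb_mem\<close>: an affine combination of two solutions, with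
  any real weight, is again a solution.\<close>

locale standard_form_polytope =
  fixes S :: "((nat \<Rightarrow> real) \<times> ('w \<Rightarrow> nat \<Rightarrow> real)) set"
    and C :: "'c set"
    and proj :: "'c \<Rightarrow> (nat \<Rightarrow> real) \<times> ('w \<Rightarrow> nat \<Rightarrow> real) \<Rightarrow> real"
  assumes finite_C: "finite C"
    and proj_comb: "\<And>c s u v. proj c (comb s u v) = s * proj c u + (1 - s) * proj c v"
    and proj_eqI: "\<And>u v. u \<in> S \<Longrightarrow> v \<in> S \<Longrightarrow> \<forall>c\<in>C. proj c u = proj c v \<Longrightarrow> u = v"
    and proj_nonneg: "\<And>z c. z \<in> S \<Longrightarrow> c \<in> C \<Longrightarrow> 0 \<le> proj c z"
    and proj_bounded: "\<exists>M. \<forall>z\<in>S. \<forall>c\<in>C. proj c z \<le> M"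
    and comb_mem: "\<And>s u v. u \<in> S \<Longrightarrow> v \<in> S \<Longrightarrow> \<forall>c\<in>C. 0 \<le> proj c (comb s u v) \<Longrightarrow> comb s u v \<in> S"
begin

definition zeros :: "(nat \<Rightarrow> real) \<times> ('w \<Rightarrow> nat \<Rightarrow> real) \<Rightarrow> 'c set" where
  "zeros z = {c \<in> C. proj c z = 0}"

lemma proj_comb_ray: "proj c (comb s u v) = proj c v - s * (proj c v - proj c u)"
  by (simp add: proj_comb algebra_simps)

lemma exists_proj_less:
  assumes u: "u \<in> S" and v: "v \<in> S" and "u \<noteq> v"
  shows "\<exists>c\<in>C. proj c u < proj c v"
proof (rule ccontr)
  \<comment> \<open>Otherwise the ray from \<open>v\<close> through \<open>u\<close> stays in \<open>S\<close>, which is bounded.\<close>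
  assume "\<not> ?thesis"
  then have le: "proj c v \<le> proj c u" if "c \<in> C" for c
    using that by auto
  obtain c1 where "c1 \<in> C" "proj c1 u \<noteq> proj c1 v"
    using proj_eqI[OF u v] \<open>u \<noteq> v\<close> by blast
  with le have c1: "c1 \<in> C" "proj c1 v < proj c1 u"
    by (auto simp: less_le)
  obtain M where M: "\<forall>z\<in>S. \<forall>c\<in>C. proj c z \<le> M"
    using proj_bounded by blast
  define s where "s = (\<bar>M\<bar> + 1) / (proj c1 u - proj c1 v)"
  have s: "0 \<le> s" "s * (proj c1 u - proj c1 v) = \<bar>M\<bar> + 1"
    using c1 by (auto simp: s_def)
  have "0 \<le> proj c (comb s u v)" if "c \<in> C" for c
  proof -
    have "s * (proj c v - proj c u) \<le> 0"
      using le[OF that] s(1) by (simp add: mult_nonneg_nonpos)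
    then show ?thesis
      using proj_nonneg[OF v that] by (simp add: proj_comb_ray)
  qed
  then have "comb s u v \<in> S"
    using comb_mem[OF u v] by blast
  then have "proj c1 (comb s u v) \<le> M"
    using M c1(1) by blast
  moreover have "proj c1 (comb s u v) = proj c1 v + (\<bar>M\<bar> + 1)"
    using s(2) by (simp add: proj_comb_ray algebra_simps)
  ultimately show False
    using proj_nonneg[OF v c1(1)] by linarith
qed

lemma exists_comb_more_zeros:
  assumes u: "u \<in> S" and v: "v \<in> S" and "u \<noteq> v" and t: "0 < t" "t < 1"
  shows "\<exists>s>t. comb s u v \<in> S \<and> zeros (comb t u v) \<subset> zeros (comb s u v)"
proof -
  \<comment> \<open>\<open>s\<close> is the largest step along the line from \<open>v\<close> through \<open>u\<close> keeping all coordinates nonnegative.\<close>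
  define P where "P = {c \<in> C. proj c u < proj c v}"
  define r where "r c = proj c v / (proj c v - proj c u)" for c
  have "finite P" "P \<noteq> {}"
    using finite_C exists_proj_less[OF assms(1-3)] by (auto simp: P_def)
  then obtain c0 where c0: "c0 \<in> P" and c0_min: "\<And>c. c \<in> P \<Longrightarrow> r c0 \<le> r c"
    using arg_min_if_finite[of P r] by (meson not_le)
  define s where "s = r c0"
  have r_zero: "proj c (comb (r c) u v) = 0" if "c \<in> P" for c
    using that by (simp add: proj_comb_ray r_def P_def)
  have pos: "0 < proj c (comb t u v)" if "c \<in> P" for c
  proof -
    have "0 \<le> proj c u" "proj c u < proj c v"
      using that proj_nonneg[OF u] by (auto simp: P_def)
    then have "0 \<le> t * proj c u" "0 < (1 - t) * proj c v"
      using t by auto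
    then show ?thesis
      by (simp add: proj_comb)
  qed
  have t_lt_r: "t < r c" if "c \<in> P" for c
    using pos[OF that] that by (simp add: proj_comb_ray r_def P_def pos_less_divide_eq algebra_simps)
  then have "t < s"
    using c0 by (simp add: s_def)
  have "0 \<le> proj c (comb s u v)" if "c \<in> C" for c
  proof (cases "c \<in> P")
    case True
    then have "s * (proj c v - proj c u) \<le> r c * (proj c v - proj c u)"
      using c0_min by (intro mult_right_mono) (auto simp: s_def P_def)
    then show ?thesis
      using r_zero[OF True] by (simp add: proj_comb_ray)
  next
    case False
    then have "s * (proj c v - proj c u) \<le> 0"
      using that \<open>t < s\<close> t by (simp add: P_def mult_nonneg_nonpos)
    then show ?thesis
      using proj_nonneg[OF v that] by (simp add: proj_comb_ray)
  qed
  then have s_mem: "comb s u v \<in> S"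
    using comb_mem[OF u v] by blast
  have "zeros (comb t u v) \<subseteq> zeros (comb s u v)"
  proof
    fix c
    assume c: "c \<in> zeros (comb t u v)"
    then have "c \<in> C" "t * proj c u + (1 - t) * proj c v = 0"
      by (auto simp: zeros_def proj_comb)
    moreover have "0 \<le> t * proj c u" "0 \<le> (1 - t) * proj c v"
      using \<open>c \<in> C\<close> t proj_nonneg[OF u] proj_nonneg[OF v] by auto
    ultimately have "t * proj c u = 0" "(1 - t) * proj c v = 0"
      by linarith+
    then have "proj c u = 0" "proj c v = 0"
      using t by auto
    then show "c \<in> zeros (comb s u v)"
      using \<open>c \<in> C\<close> by (simp add: zeros_def proj_comb)
  qed
  moreover have "c0 \<in> zeros (comb s u v) - zeros (comb t u v)"
    using c0 r_zero[OF c0] pos[OF c0] by (auto simp: zeros_def P_def s_def)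
  ultimately show ?thesis
    using \<open>t < s\<close> s_mem by blast
qed

lemma face_has_extreme_point:
  assumes "M \<subseteq> S" "M \<noteq> {}"
    and face: "\<And>u v t. u \<in> S \<Longrightarrow> v \<in> S \<Longrightarrow> 0 < t \<Longrightarrow> t < 1 \<Longrightarrow> comb t u v \<in> M \<Longrightarrow> u \<in> M \<and> v \<in> M"
  shows "\<exists>z\<in>M. extreme_pt z S"
proof -
  have "card (zeros z) < card C + 1" for z
    using card_mono[OF finite_C, of "zeros z"] by (auto simp: zeros_def)
  then obtain z0 where z0: "z0 \<in> M" and z0_max: "\<And>z. z \<in> M \<Longrightarrow> card (zeros z) \<le> card (zeros z0)"
    using Lattices_Big.ex_has_greatest_nat[of "\<lambda>z. z \<in> M" _ "\<lambda>z. card (zeros z)" "card C + 1"] \<open>M \<noteq> {}\<close>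
    by blast
  have "extreme_pt z0 S"
  proof (rule ccontr)
    assume "\<not> extreme_pt z0 S"
    then obtain u v t where uv: "u \<in> S" "v \<in> S" "u \<noteq> v" and t: "0 < t" "t < 1"
      and z0_eq: "z0 = comb t u v"
      using z0 \<open>M \<subseteq> S\<close> unfolding extreme_pt_def by blast
    then obtain s where s: "t < s" "comb s u v \<in> S" and more_zeros: "zeros z0 \<subset> zeros (comb s u v)"
      using exists_comb_more_zeros by blast
    have "z0 = comb (t / s) (comb s u v) v"
      using z0_eq s t by (simp add: comb_comb)
    then have "comb s u v \<in> M"
      using face[OF s(2) uv(2), of "t / s"] z0 s t by simp
    moreover have "card (zeros z0) < card (zeros (comb s u v))"
      using more_zeros finite_C by (intro psubset_card_mono) (auto simp: zeros_def)
    ultimately show False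
      using z0_max by fastforce
  qed
  then show ?thesis
    using z0 by blast
qed

end

lemma standard_form_polytope_fixed_integers:
  fixes \<Omega> :: "'w set" and nI ny nx m1 m2 :: nat
    and A :: "nat \<Rightarrow> nat \<Rightarrow> real" and b :: "nat \<Rightarrow> real" and D :: "nat \<Rightarrow> nat \<Rightarrow> real"
    and B :: "'w \<Rightarrow> nat \<Rightarrow> nat \<Rightarrow> real" and d :: "'w \<Rightarrow> nat \<Rightarrow> real" and ys :: "nat \<Rightarrow> real"
  defines "X \<equiv> feasX nI ny nx \<Omega> m1 A b m2 D B d"
  defines "S \<equiv> {(y, x) \<in> X. \<forall>i<nI. y i = ys i}"
  assumes fin: "finite \<Omega>"
    and bounded: "\<exists>M. \<forall>(y, x) \<in> X. (\<forall>i<ny. \<bar>y i\<bar> \<le> M) \<and> (\<forall>w\<in>\<Omega>. \<forall>j<nx. \<bar>x w j\<bar> \<le> M)"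
  shows "standard_form_polytope S (coordset ny nx \<Omega>) coord"
proof
  have S_iff: "z \<in> S \<longleftrightarrow> z \<in> X \<and> (\<forall>i<nI. fst z i = ys i)" for z
    by (cases z) (simp add: S_def)
  show "finite (coordset ny nx \<Omega>)"
    using fin by (rule finite_coordset)
  show "coord c (comb s u v) = s * coord c u + (1 - s) * coord c v" for c s u v
    by (rule coord_comb)
  show "u = v" if "u \<in> S" "v \<in> S" "\<forall>c\<in>coordset ny nx \<Omega>. coord c u = coord c v" for u v
    using that unfolding S_iff X_def by (blast intro: feasX_coord_eqI)
  show "0 \<le> coord c z" if "z \<in> S" "c \<in> coordset ny nx \<Omega>" for z c
    using that unfolding S_iff X_def by (blast intro: feasX_nonneg)
  obtain M where M: "\<forall>(y, x) \<in> X. (\<forall>i<ny. \<bar>y i\<bar> \<le> M) \<and> (\<forall>w\<in>\<Omega>. \<forall>j<nx. \<bar>x w j\<bar> \<le> M)"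
    using bounded by blast
  have "coord c z \<le> M" if "z \<in> S" "c \<in> coordset ny nx \<Omega>" for z c
    using that M by (cases z) (fastforce simp: S_iff coordset_def)
  then show "\<exists>M. \<forall>z\<in>S. \<forall>c\<in>coordset ny nx \<Omega>. coord c z \<le> M"
    by blast
  show "comb s u v \<in> S"
    if "u \<in> S" "v \<in> S" "\<forall>c\<in>coordset ny nx \<Omega>. 0 \<le> coord c (comb s u v)" for s u v
  proof -
    have "comb s u v \<in> X"
      using that unfolding S_iff X_def by (intro feasX_comb) auto
    moreover have "fst (comb s u v) i = ys i" if "i < nI" for i
      using \<open>u \<in> S\<close> \<open>v \<in> S\<close> that by (simp add: S_iff comb_def algebra_simps)
    ultimately show ?thesis
      by (simp add: S_iff)
  qed
qed

lemma sp_obj_concave: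
  assumes "\<forall>i<ny. concave_on UNIV (f i)" "\<forall>i<ny. 2 \<le> k i"
    and "\<forall>i<ny. \<forall>j. j + 1 < k i \<longrightarrow> bp i j < bp i (j + 1)"
    and u: "\<forall>i<ny. fst u i \<in> {bp i 0..bp i (k i - 1)}" and v: "\<forall>i<ny. fst v i \<in> {bp i 0..bp i (k i - 1)}"
    and t: "0 \<le> t" "t \<le> 1"
  shows "t * sp_obj ny nx \<Omega> f bp k p c u + (1 - t) * sp_obj ny nx \<Omega> f bp k p c v
    \<le> sp_obj ny nx \<Omega> f bp k p c (comb t u v)"
proof -
  have "t * fbar f bp k i (fst u i) + (1 - t) * fbar f bp k i (fst v i) \<le> fbar f bp k i (fst (comb t u v) i)"
    if "i < ny" for i
    using concave_onD[OF concave_on_fbar[of f i k bp], of t "fst v i" "fst u i"] assms that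
    by (simp add: comb_def algebra_simps)
  then have "(\<Sum>i<ny. t * fbar f bp k i (fst u i) + (1 - t) * fbar f bp k i (fst v i))
      \<le> (\<Sum>i<ny. fbar f bp k i (fst (comb t u v) i))"
    by (intro sum_mono) simp
  then have "t * (\<Sum>i<ny. fbar f bp k i (fst u i)) + (1 - t) * (\<Sum>i<ny. fbar f bp k i (fst v i))
      \<le> (\<Sum>i<ny. fbar f bp k i (fst (comb t u v) i))"
    by (simp add: sum.distrib sum_distrib_left)
  moreover have "(\<Sum>w\<in>\<Omega>. p w * (\<Sum>j<nx. c w j * snd (comb t u v) w j))
      = t * (\<Sum>w\<in>\<Omega>. p w * (\<Sum>j<nx. c w j * snd u w j))
        + (1 - t) * (\<Sum>w\<in>\<Omega>. p w * (\<Sum>j<nx. c w j * snd v w j))"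
    by (simp add: comb_def sum_mult_comb)
  ultimately show ?thesis
    unfolding sp_obj_def by (simp add: ring_distribs)
qed

lemma concave_argmin_face:
  fixes g :: "(nat \<Rightarrow> real) \<times> ('w \<Rightarrow> nat \<Rightarrow> real) \<Rightarrow> real"
  assumes concave: "\<And>u v t. u \<in> S \<Longrightarrow> v \<in> S \<Longrightarrow> 0 \<le> t \<Longrightarrow> t \<le> 1 \<Longrightarrow>
      t * g u + (1 - t) * g v \<le> g (comb t u v)"
    and min: "\<And>z. z \<in> S \<Longrightarrow> m \<le> g z"
    and uv: "u \<in> S" "v \<in> S" and t: "0 < t" "t < 1" and "g (comb t u v) \<le> m"
  shows "g u = m" "g v = m"
proof -
  have "0 \<le> t * (g u - m)" "0 \<le> (1 - t) * (g v - m)"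
    using min[OF uv(1)] min[OF uv(2)] t by simp_all
  moreover have "t * (g u - m) + (1 - t) * (g v - m) \<le> 0"
    using concave[OF uv less_imp_le[OF t(1)] less_imp_le[OF t(2)]] \<open>g (comb t u v) \<le> m\<close>
    by (simp add: algebra_simps)
  ultimately have "t * (g u - m) = 0" "(1 - t) * (g v - m) = 0"
    by linarith+
  then show "g u = m" "g v = m"
    using t by simp_all
qed

theorem lemma1:
  fixes \<Omega> :: "'w set"
    and nI ny nx m1 m2 :: nat
    and A :: "nat \<Rightarrow> nat \<Rightarrow> real" and b :: "nat \<Rightarrow> real"
    and D :: "nat \<Rightarrow> nat \<Rightarrow> real"
    and B :: "'w \<Rightarrow> nat \<Rightarrow> nat \<Rightarrow> real" and d :: "'w \<Rightarrow> nat \<Rightarrow> real"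
    and p :: "'w \<Rightarrow> real" and c :: "'w \<Rightarrow> nat \<Rightarrow> real"
    and f :: "nat \<Rightarrow> real \<Rightarrow> real"
    and bp :: "nat \<Rightarrow> nat \<Rightarrow> real" and k :: "nat \<Rightarrow> nat"
    and ys :: "nat \<Rightarrow> real" and xs :: "'w \<Rightarrow> nat \<Rightarrow> real"
  assumes fin: "finite \<Omega>"
    and nI: "nI \<le> ny"
    and nonempty: "feasX nI ny nx \<Omega> m1 A b m2 D B d \<noteq> {}"
    and bounded: "\<exists>M. \<forall>(y, x) \<in> feasX nI ny nx \<Omega> m1 A b m2 D B d.
                     (\<forall>i<ny. \<bar>y i\<bar> \<le> M) \<and> (\<forall>w\<in>\<Omega>. \<forall>j<nx. \<bar>x w j\<bar> \<le> M)"
    and concave: "\<forall>i<ny. concave_on UNIV (f i)"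
    and lsc: "\<forall>i<ny. lsc (f i)"
    and k2: "\<forall>i<ny. 2 \<le> k i"
    and bp_mono: "\<forall>i<ny. \<forall>j. j + 1 < k i \<longrightarrow> bp i j < bp i (j + 1)"
    and bp_range: "\<forall>(y, x) \<in> feasX nI ny nx \<Omega> m1 A b m2 D B d.
                     \<forall>i<ny. bp i 0 \<le> y i \<and> y i \<le> bp i (k i - 1)"
    and opt_mem: "(ys, xs) \<in> feasX nI ny nx \<Omega> m1 A b m2 D B d"
    and opt: "\<forall>z \<in> feasX nI ny nx \<Omega> m1 A b m2 D B d.
                sp_obj ny nx \<Omega> f bp k p c (ys, xs) \<le> sp_obj ny nx \<Omega> f bp k p c z"
  shows "\<exists>z. extreme_pt z {(y, x) \<in> feasX nI ny nx \<Omega> m1 A b m2 D B d. \<forall>i<nI. y i = ys i}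
            \<and> (\<forall>z' \<in> feasX nI ny nx \<Omega> m1 A b m2 D B d.
                  sp_obj ny nx \<Omega> f bp k p c z \<le> sp_obj ny nx \<Omega> f bp k p c z')"
proof -
  define X where "X = feasX nI ny nx \<Omega> m1 A b m2 D B d"
  define S where "S = {(y, x) \<in> X. \<forall>i<nI. y i = ys i}"
  define g where "g = sp_obj ny nx \<Omega> f bp k p c"
  define M where "M = {z \<in> S. g z = g (ys, xs)}"
  interpret standard_form_polytope S "coordset ny nx \<Omega>" coord
    unfolding S_def X_def using fin bounded by (rule standard_form_polytope_fixed_integers)
  have g_min: "g (ys, xs) \<le> g z" if "z \<in> S" for z
    using opt that by (auto simp: S_def X_def g_def)
  have in_range: "\<forall>i<ny. fst z i \<in> {bp i 0..bp i (k i - 1)}" if "z \<in> S" for z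
    using bp_range that by (cases z) (auto simp: S_def X_def)
  have g_concave: "t * g u + (1 - t) * g v \<le> g (comb t u v)"
    if "u \<in> S" "v \<in> S" "0 \<le> t" "t \<le> 1" for u v t
    unfolding g_def by (intro sp_obj_concave[OF concave k2 bp_mono in_range in_range]) (use that in auto)
  have face: "u \<in> M \<and> v \<in> M" if "u \<in> S" "v \<in> S" "0 < t" "t < 1" "comb t u v \<in> M" for u v t
    using concave_argmin_face[OF g_concave g_min that(1-4)] that(1,2,5) by (simp add: M_def)
  have "(ys, xs) \<in> M"
    using opt_mem by (simp add: M_def S_def X_def)
  then have "\<exists>z\<in>M. extreme_pt z S"
    by (intro face_has_extreme_point[OF _ _ face]) (auto simp: M_def)
  then obtain z where z: "z \<in> M" "extreme_pt z S" ..
  show ?thesis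
  proof (intro exI conjI)
    show "extreme_pt z {(y, x) \<in> feasX nI ny nx \<Omega> m1 A b m2 D B d. \<forall>i<nI. y i = ys i}"
      using z(2) by (simp add: S_def X_def)
    show "\<forall>z'\<in>feasX nI ny nx \<Omega> m1 A b m2 D B d. sp_obj ny nx \<Omega> f bp k p c z \<le> sp_obj ny nx \<Omega> f bp k p c z'"
      using z(1) opt by (simp add: M_def g_def)
  qed
qed

end
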